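(* Let $t\geq 1$ be an integer, $m=8t+4$, $n=2^m+1$, and let $\delta_1,\dots,\delta_5$ be defined as follows: $\delta_1=\frac{3n}{17}$; if $t=1$, $\delta_2=\delta_1-6$, $\delta_3=\delta_2-24$, $\delta_4=\delta_3-2$, $\delta_5=\delta_4-38$; if $t=2$, $\delta_2=\delta_1-\frac{\delta_1+45}{128}$, $\delta_3=\delta_2-90$, $\delta_4=\delta_3-6$, $\delta_5=\delta_4-384$; if $t\geq 3$, $\delta_2=\delta_1-\frac{\delta_1+45}{128}$, $\delta_3=\delta_2-90$, $\delta_4=\delta_3-22950$, $\delta_5=\delta_4-90$. If $1\leq x\leq 2^{4t+3}+2^{4t+2}+2^{4t+1}+1$ or $x\in\{\delta_2,\delta_3,\delta_4,\delta_5\}$, then $|C_x|=2m$. Moreover $|C_{\delta_1}|=8$.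
   Context: For $n=2^m+1$ and an integer $x$, the 2-cyclotomic coset of $x$ modulo $n$ is $C_x=\{x\cdot 2^{j} \bmod n : j\geq 0\}\subseteq\{0,1,\dots,n-1\}$, and $|C_x|$ its cardinality. *)

theory Defs
  imports Main
begin

definition cyc_coset :: "nat \<Rightarrow> int \<Rightarrow> int set" where
  "cyc_coset n x = {(x * 2 ^ j) mod int n | j :: nat. True}"

definition mpar :: "nat \<Rightarrow> nat" where "mpar t = 8 * t + 4"
definition npar :: "nat \<Rightarrow> nat" where "npar t = 2 ^ mpar t + 1"

text \<open>The values delta_1, ..., delta_5 (all integers: 17 divides n and 128 divides delta_1 + 45).\<close>
definition delta1 :: "nat \<Rightarrow> int" where
  "delta1 t = 3 * int (npar t) div 17"

definition delta2 :: "nat \<Rightarrow> int" where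
  "delta2 t = (if t = 1 then delta1 t - 6 else delta1 t - (delta1 t + 45) div 128)"

definition delta3 :: "nat \<Rightarrow> int" where
  "delta3 t = (if t = 1 then delta2 t - 24 else delta2 t - 90)"

definition delta4 :: "nat \<Rightarrow> int" where
  "delta4 t = (if t = 1 then delta3 t - 2 else if t = 2 then delta3 t - 6 else delta3 t - 22950)"

definition delta5 :: "nat \<Rightarrow> int" where
  "delta5 t = (if t = 1 then delta4 t - 38 else if t = 2 then delta4 t - 384 else delta4 t - 90)"

end

theory Submission
  imports Defs "HOL-Number_Theory.Cong"
begin

text \<open>Modulo \<open>n = 2^m + 1\<close> we have \<open>2^m \<equiv> -1\<close>, so \<open>x 2^(2m) \<equiv> x\<close> and \<open>|C_x|\<close> is the least
  period \<open>d\<close> of \<open>j \<mapsto> x 2^j\<close>, a divisor of \<open>2m\<close>. If \<open>d\<close> is a proper divisor, either \<open>d\<close>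
  divides \<open>m\<close>, which forces \<open>n | 2x\<close>, or \<open>d = 2k\<close> with \<open>m = kq\<close> and \<open>q \<ge> 3\<close> odd; then
  \<open>2^k - 1\<close> is coprime to \<open>n\<close>, so \<open>n | x (2^k + 1)\<close>.
  For \<open>m = 8t + 4\<close> every such \<open>k\<close> is \<open>4e\<close> with \<open>e\<close> odd, hence \<open>17 | 2^k + 1 | n\<close>. For small
  \<open>x\<close> the product \<open>x (2^k + 1)\<close> is positive and below \<open>n\<close>. For the \<open>\<delta>\<^sub>i\<close> with \<open>t \<ge> 2\<close> the cofactor
  \<open>N = n / (2^k + 1)\<close> divides both \<open>\<delta>\<^sub>1 = 3n/17\<close> and \<open>\<delta>\<^sub>i\<close>, hence the small positive
  number \<open>128 (\<delta>\<^sub>1 - \<delta>\<^sub>i) - \<delta>\<^sub>1\<close>, while \<open>N\<close> itself is large.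
  Finally \<open>\<delta>\<^sub>1\<close> has period exactly 8 because the order of 2 modulo 17 is 8.\<close>

lemma cong_mult_pow2_multiple:
  fixes n x :: int
  assumes "[x * 2^d = x] (mod n)"
  shows "[x * 2^(d * q) = x] (mod n)"
proof (induction q)
  case (Suc q)
  have "[x * 2^(d * q) * 2^d = x * 2^d] (mod n)"
    using Suc by (rule cong_scalar_right)
  also have "[x * 2^d = x] (mod n)" by (fact assms)
  finally show ?case by (simp add: power_add mult_ac)
qed simp

lemma cong_mult_pow2_cancel:
  fixes n x :: int
  assumes "odd n" and "i \<le> j" and "[x * 2^j = x * 2^i] (mod n)"
  shows "[x * 2^(j - i) = x] (mod n)"
proof -
  have "coprime (2^i) n" using assms(1) by simp
  moreover have "[x * 2^(j - i) * 2^i = x * 2^i] (mod n)"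
    using assms(2,3) by (simp add: mult.assoc power_add [symmetric])
  ultimately show ?thesis using cong_mult_rcancel by blast
qed

lemma least_doubling_period_dvd:
  fixes n x :: int
  assumes "0 < d" and period: "[x * 2^d = x] (mod n)"
    and least: "\<And>j. 0 < j \<Longrightarrow> j < d \<Longrightarrow> [x * 2^j \<noteq> x] (mod n)"
    and "[x * 2^p = x] (mod n)"
  shows "d dvd p"
proof -
  have "[x * 2^(d * (p div d)) * 2^(p mod d) = x * 2^(p mod d)] (mod n)"
    using cong_mult_pow2_multiple [OF period] by (rule cong_scalar_right)
  then have "[x * 2^p = x * 2^(p mod d)] (mod n)"
    by (metis div_mult_mod_eq mult.assoc mult.commute power_add)
  with assms(4) have "[x * 2^(p mod d) = x] (mod n)"
    by (metis cong_sym cong_trans)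
  then show ?thesis
    using least [of "p mod d"] \<open>0 < d\<close> by (auto simp: mod_eq_0_iff_dvd)
qed

lemma least_doubling_periodE:
  fixes n x :: int
  assumes "0 < p" and "[x * 2^p = x] (mod n)"
  obtains d where "0 < d" "[x * 2^d = x] (mod n)"
    "\<And>j. 0 < j \<Longrightarrow> j < d \<Longrightarrow> [x * 2^j \<noteq> x] (mod n)"
  using exists_least_iff [of "\<lambda>d. 0 < d \<and> [x * 2^d = x] (mod n)"] assms by blast

lemma card_cyc_coset_least_period:
  fixes x :: int
  assumes "odd n" and "0 < d" and period: "[x * 2^d = x] (mod int n)"
    and least: "\<And>j. 0 < j \<Longrightarrow> j < d \<Longrightarrow> [x * 2^j \<noteq> x] (mod int n)"
  shows "card (cyc_coset n x) = d"
proof -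
  let ?f = "\<lambda>j. x * 2^j mod int n"
  have "?f j = ?f (j mod d)" for j
  proof -
    have "[x * 2^(d * (j div d)) * 2^(j mod d) = x * 2^(j mod d)] (mod int n)"
      using cong_mult_pow2_multiple [OF period] by (rule cong_scalar_right)
    then show ?thesis
      by (metis cong_def div_mult_mod_eq mult.assoc mult.commute power_add)
  qed
  then have "cyc_coset n x = ?f ` {..<d}"
    using \<open>0 < d\<close> unfolding cyc_coset_def by (force intro: image_eqI [where x = "_ mod d"])
  moreover have "inj_on ?f {..<d}"
  proof (rule linorder_inj_onI')
    fix i j assume "i \<in> {..<d}" "j \<in> {..<d}" "i < j"
    show "?f i \<noteq> ?f j"
    proof
      assume "?f i = ?f j"
      then have "[x * 2^(j - i) = x] (mod int n)"
        using \<open>odd n\<close> \<open>i < j\<close> by (intro cong_mult_pow2_cancel) (auto simp: cong_def)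
      moreover have "0 < j - i" "j - i < d"
        using \<open>i < j\<close> \<open>j \<in> {..<d}\<close> by auto
      ultimately show False using least by blast
    qed
  qed
  ultimately show ?thesis by (simp add: card_image)
qed

lemma cong_mult_pow2_neg:
  fixes x :: int
  shows "[x * 2^m = - x] (mod 2^m + 1)"
proof -
  have "x * 2^m - - x = (2^m + 1) * x" by (simp add: algebra_simps)
  then show ?thesis unfolding cong_iff_dvd_diff by simp
qed

lemma two_pow_plus_one_dvd:
  assumes "odd q"
  shows "(2::int)^k + 1 dvd 2^(k * q) + 1"
proof -
  have "[(2::int)^k = -1] (mod 2^k + 1)"
    by (simp add: cong_iff_dvd_diff)
  then have "[((2::int)^k)^q = (-1)^q] (mod 2^k + 1)"
    by (rule cong_pow)
  with assms show ?thesis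
    by (simp add: power_mult cong_iff_dvd_diff)
qed

lemma two_pow_minus_one_dvd: "(2::int)^k - 1 dvd 2^(k * q) - 1"
proof -
  have "[(2::int)^k = 1] (mod 2^k - 1)"
    by (simp add: cong_iff_dvd_diff)
  then have "[((2::int)^k)^q = 1^q] (mod 2^k - 1)"
    by (rule cong_pow)
  then show ?thesis
    by (simp add: power_mult cong_iff_dvd_diff)
qed

lemma coprime_two_pow_plus_one_minus_one:
  assumes "0 < k"
  shows "coprime ((2::int)^(k * q) + 1) (2^k - 1)"
proof (rule coprimeI)
  fix c :: int
  assume c: "c dvd 2^(k * q) + 1" "c dvd 2^k - 1"
  then have "c dvd (2^(k * q) + 1) - (2^(k * q) - 1)"
    using two_pow_minus_one_dvd dvd_trans dvd_diff by blast
  then have "c dvd 2" by simp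
  moreover have "odd ((2::int)^k - 1)" using assms by simp
  then have "odd c" using c(2) by (meson dvd_trans)
  then have "coprime 2 c" by (simp add: coprime_left_2_iff_odd)
  ultimately have "coprime c c" using coprime_divisors [of c 2 c c] by simp
  then show "is_unit c" by simp
qed

lemma dvd_of_cong_mult_pow2_self:
  fixes x :: int
  assumes "0 < m" and "[x * 2^m = x] (mod 2^m + 1)"
  shows "2^m + 1 dvd x"
proof -
  have "[x = - x] (mod 2^m + 1)"
    using assms(2) cong_mult_pow2_neg cong_sym cong_trans by blast
  then have "2^m + 1 dvd 2 * x"
    unfolding cong_iff_dvd_diff mult_2 by simp
  moreover have "coprime ((2::int)^m + 1) 2" using assms(1) by simp
  ultimately show ?thesis by (metis coprime_dvd_mult_right_iff)
qed

lemma dvd_mult_of_cong_mult_pow2_self: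
  fixes x :: int
  assumes "0 < k" and "[x * 2^(2 * k) = x] (mod 2^(k * q) + 1)"
  shows "2^(k * q) + 1 dvd x * (2^k + 1)"
proof -
  have "2^(k * q) + 1 dvd x * 2^(2 * k) - x"
    using assms(2) by (simp add: cong_iff_dvd_diff)
  also have "x * 2^(2 * k) - x = (2^k - 1) * (x * (2^k + 1))"
    by (simp add: power_mult power2_eq_square algebra_simps)
  finally show ?thesis
    using coprime_two_pow_plus_one_minus_one [OF assms(1)]
    by (simp add: coprime_dvd_mult_right_iff)
qed

lemma card_cyc_coset_two_pow_plus_one:
  fixes m :: nat and x :: int
  assumes "0 < m" and "\<not> 2^m + 1 dvd x"
    and no_divisor: "\<And>k q. m = k * q \<Longrightarrow> odd q \<Longrightarrow> 3 \<le> q \<Longrightarrow> \<not> 2^m + 1 dvd x * (2^k + 1)"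
  shows "card (cyc_coset (2^m + 1) x) = 2 * m"
proof -
  let ?n = "(2::int)^m + 1"
  have n: "int (2^m + 1) = ?n" by simp
  have neg: "[x * 2^m = - x] (mod ?n)" by (rule cong_mult_pow2_neg)
  have "[x * 2^m * 2^m = - x * 2^m] (mod ?n)"
    using neg by (rule cong_scalar_right)
  also have "[- x * 2^m = x] (mod ?n)"
    using cong_uminus [OF neg] by simp
  finally have period: "[x * 2^(2 * m) = x] (mod ?n)"
    by (simp add: mult_2 power_add mult.assoc)
  obtain d where "0 < d" and d_period: "[x * 2^d = x] (mod ?n)"
    and least: "\<And>j. 0 < j \<Longrightarrow> j < d \<Longrightarrow> [x * 2^j \<noteq> x] (mod ?n)"
    using least_doubling_periodE [OF _ period] \<open>0 < m\<close> by auto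
  obtain q where dq: "2 * m = d * q"
    using least_doubling_period_dvd [OF \<open>0 < d\<close> d_period least period] by blast
  have "q = 1"
  proof (rule ccontr)
    assume "q \<noteq> 1"
    then have "2 \<le> q" using dq \<open>0 < m\<close> by (cases q) auto
    show False
    proof (cases "even q")
      case True
      then have "m = d * (q div 2)" using dq by auto
      then have "[x * 2^m = x] (mod ?n)"
        using cong_mult_pow2_multiple [OF d_period] by simp
      then have "?n dvd x" by (rule dvd_of_cong_mult_pow2_self [OF \<open>0 < m\<close>])
      with \<open>\<not> ?n dvd x\<close> show False ..
    next
      case False
      have "even (d * q)" by (simp flip: dq)
      with False have "even d" by simp
      then obtain k where "d = 2 * k" ..
      with dq \<open>0 < d\<close> have m: "m = k * q" and "0 < k" by auto
      with d_period \<open>d = 2 * k\<close> have "?n dvd x * (2^k + 1)"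
        using dvd_mult_of_cong_mult_pow2_self by simp
      moreover have "3 \<le> q" using False \<open>2 \<le> q\<close> by presburger
      ultimately show False
        using no_divisor m False by simp
    qed
  qed
  with dq have "d = 2 * m" by simp
  with \<open>0 < m\<close> \<open>0 < d\<close> d_period least show ?thesis
    using card_cyc_coset_least_period [of "2^m + 1" d x, unfolded n] by simp
qed

lemma npar_int: "int (npar t) = 2^(8 * t + 4) + 1"
  by (simp add: npar_def mpar_def)

lemma npar_pos: "0 < int (npar t)"
  unfolding npar_int by (simp add: add_pos_pos)

lemma odd_cofactor:
  fixes t e q :: nat
  assumes "2 * t + 1 = e * q" and "3 \<le> q"
  shows "odd e" and "3 * e \<le> 2 * t + 1"
proof -
  have "odd (e * q)" by (simp flip: assms(1))
  then show "odd e" by simp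
  have "e * 3 \<le> e * q" using assms(2) by (rule mult_le_mono2)
  then show "3 * e \<le> 2 * t + 1" using assms(1) by (metis mult.commute)
qed

lemma card_cyc_coset_npar:
  fixes x :: int
  assumes "0 < x" and "x < int (npar t)"
    and no_divisor: "\<And>e q. 2 * t + 1 = e * q \<Longrightarrow> 3 \<le> q \<Longrightarrow> \<not> int (npar t) dvd x * (2^(4 * e) + 1)"
  shows "card (cyc_coset (npar t) x) = 2 * mpar t"
proof -
  have n: "int (npar t) = 2^mpar t + 1" by (simp add: npar_def)
  have "card (cyc_coset (2^mpar t + 1) x) = 2 * mpar t"
  proof (rule card_cyc_coset_two_pow_plus_one)
    show "0 < mpar t" by (simp add: mpar_def)
    show "\<not> 2^mpar t + 1 dvd x"
      using assms(1,2) zdvd_imp_le unfolding n by fastforce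
    fix k q assume "mpar t = k * q" "odd q" "3 \<le> q"
    then have "k * q = 4 * (2 * t + 1)" by (simp add: mpar_def)
    then have "4 dvd k * q" by (metis dvd_triv_left)
    moreover have "coprime 4 q"
      using \<open>odd q\<close> coprime_power_left_iff [of 2 2 q] by simp
    ultimately have "4 dvd k" by (simp add: coprime_dvd_mult_left_iff)
    then obtain e where "k = 4 * e" ..
    with \<open>mpar t = k * q\<close> have "2 * t + 1 = e * q" by (simp add: mpar_def)
    with no_divisor [of e q] \<open>3 \<le> q\<close> \<open>k = 4 * e\<close>
    show "\<not> 2^mpar t + 1 dvd x * (2^k + 1)"
      unfolding n by simp
  qed
  then show ?thesis by (simp add: npar_def)
qed

lemma two_pow_plus_one_dvd_npar:
  assumes "2 * t + 1 = e * q"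
  shows "(2::int)^(4 * e) + 1 dvd int (npar t)"
proof -
  have "odd (e * q)" by (simp flip: assms)
  then have "(2::int)^(4 * e) + 1 dvd 2^(4 * e * q) + 1"
    by (intro two_pow_plus_one_dvd) simp
  moreover have "4 * e * q = 8 * t + 4" by (simp flip: assms add: mult.assoc)
  ultimately show ?thesis by (simp add: npar_int)
qed

lemma seventeen_dvd_two_pow_plus_one:
  "odd e \<Longrightarrow> (17::int) dvd 2^(4 * e) + 1"
  using two_pow_plus_one_dvd [of e 4] by simp

lemma delta1_mult_17: "17 * delta1 t = 3 * int (npar t)"
proof -
  have "(17::int) dvd 2^(4 * (2 * t + 1)) + 1"
    by (rule seventeen_dvd_two_pow_plus_one) simp
  then have "17 dvd int (npar t)" by (simp add: npar_int ac_simps)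
  then show ?thesis by (auto simp: delta1_def)
qed

lemma delta1_plus_45_dvd:
  assumes "1 \<le> t"
  shows "128 dvd delta1 t + 45"
proof -
  have "8 * t + 4 = 7 + (8 * t - 3)" using assms by simp
  then have "(2::int)^(8 * t + 4) = 128 * 2^(8 * t - 3)"
    by (simp only: power_add) simp
  then have "17 * (delta1 t + 45) = 128 * (3 * 2^(8 * t - 3) + 6)"
    using delta1_mult_17 [of t] by (simp add: npar_int)
  then have "128 dvd 17 * (delta1 t + 45)" by (metis dvd_triv_left)
  moreover have "coprime (128::int) 17"
    using coprime_power_left_iff [of 2 7 "17::int"] by simp
  ultimately show ?thesis by (metis coprime_dvd_mult_right_iff)
qed

lemma card_cyc_coset_delta1: "card (cyc_coset (npar t) (delta1 t)) = 8"
proof (rule card_cyc_coset_least_period)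
  let ?n = "int (npar t)"
  show "odd (npar t)" by (simp add: npar_def mpar_def)
  show "0 < (8::nat)" by simp
  have "delta1 t * 2^8 - delta1 t = ?n * 45"
    using delta1_mult_17 [of t] by simp
  then show "[delta1 t * 2^8 = delta1 t] (mod ?n)"
    unfolding cong_iff_dvd_diff by (simp only:) simp
  fix j :: nat assume "0 < j" "j < 8"
  show "[delta1 t * 2^j \<noteq> delta1 t] (mod ?n)"
  proof
    assume "[delta1 t * 2^j = delta1 t] (mod ?n)"
    then have "?n dvd delta1 t * (2^j - 1)"
      by (simp add: cong_iff_dvd_diff algebra_simps)
    then have "?n * 17 dvd 17 * delta1 t * (2^j - 1)"
      by (simp add: mult.assoc mult_dvd_mono)
    then have "?n * 17 dvd ?n * (3 * (2^j - 1))"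
      by (simp add: delta1_mult_17 mult.assoc)
    then have "17 dvd 3 * ((2::int)^j - 1)"
      using npar_pos [of t] by (subst (asm) dvd_mult_cancel_left) simp_all
    moreover have "j \<in> {1, 2, 3, 4, 5, 6, 7}"
      using \<open>0 < j\<close> \<open>j < 8\<close> by auto
    ultimately show False by (auto simp: dvd_eq_mod_eq_0)
  qed
qed

lemma card_cyc_coset_small:
  fixes x :: int
  assumes "1 \<le> t" and "1 \<le> x" and "x \<le> 2^(4*t+3) + 2^(4*t+2) + 2^(4*t+1) + 1"
  shows "card (cyc_coset (npar t) x) = 2 * mpar t"
proof (rule card_cyc_coset_npar)
  define P :: int where "P = 2^(4 * t)"
  have "(2::int)^4 \<le> P"
    unfolding P_def using assms(1) by (intro power_increasing) auto
  then have "16 \<le> P" by simp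
  have x_le: "x \<le> 14 * P + 1"
    using assms(3) by (simp add: P_def power_add)
  have "8 * t + 4 = 4 * t * 2 + 4" by simp
  then have n: "int (npar t) = 16 * P * P + 1"
    unfolding npar_int P_def by (simp only: power_add power_mult) (simp add: power2_eq_square)
  have "15 * P < 2 * P * P"
    using \<open>16 \<le> P\<close> by (intro mult_strict_right_mono) auto
  then have bound: "(14 * P + 1) * (P + 1) < int (npar t)"
    unfolding n by (simp add: algebra_simps)
  show "0 < x" using assms(2) by simp
  have "14 * P + 1 \<le> (14 * P + 1) * (P + 1)"
    using mult_left_mono [of 1 "P + 1" "14 * P + 1"] \<open>16 \<le> P\<close> by simp
  with x_le bound show "x < int (npar t)" by linarith
  fix e q assume "2 * t + 1 = e * q" and "3 \<le> q"
  then have "3 * e \<le> 2 * t + 1" by (rule odd_cofactor(2))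
  then have "(2::int)^(4 * e) \<le> P"
    unfolding P_def using assms(1) by (intro power_increasing) auto
  then have "x * (2^(4 * e) + 1) \<le> (14 * P + 1) * (P + 1)"
    using x_le assms(2) by (intro mult_mono) auto
  with bound have "x * (2^(4 * e) + 1) < int (npar t)" by linarith
  moreover have "0 < x * (2^(4 * e) + 1)" using assms(2) by simp
  ultimately show "\<not> int (npar t) dvd x * (2^(4 * e) + 1)"
    using zdvd_imp_le by fastforce
qed

lemma card_cyc_coset_delta_t1:
  assumes "x \<in> {delta2 1, delta3 1, delta4 1, delta5 1}"
  shows "card (cyc_coset (npar 1) x) = 2 * mpar 1"
proof (rule card_cyc_coset_npar)
  have "delta1 1 = 723" by (simp add: delta1_def npar_def mpar_def)
  then have x: "x \<in> {717, 693, 691, 653}"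
    using assms by (simp add: delta2_def delta3_def delta4_def delta5_def)
  have n: "int (npar 1) = 4097" by (simp add: npar_def mpar_def)
  show "0 < x" "x < int (npar 1)" using x n by auto
  fix e q :: nat assume "2 * 1 + 1 = e * q" "3 \<le> q"
  then have "e = 1" using odd_cofactor [of 1 e q] by presburger
  with x n show "\<not> int (npar 1) dvd x * (2^(4 * e) + 1)"
    by (auto simp: dvd_eq_mod_eq_0)
qed

lemma npar_cofactor_lower_bound:
  fixes N :: int
  assumes "3 \<le> t" and eq: "2 * t + 1 = e * q" and "3 \<le> q"
    and N: "int (npar t) = (2^(4 * e) + 1) * N"
  shows "2^22 \<le> N"
proof (rule ccontr)
  assume "\<not> 2^22 \<le> N"
  then have "N \<le> 2^22 - 1" by simp
  define K :: int where "K = 2^(4 * e)"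
  have "e = 1 \<or> 3 \<le> e"
    using odd_cofactor(1) [OF eq \<open>3 \<le> q\<close>] by presburger
  then have "4 * e + 23 \<le> 8 * t + 4"
    using odd_cofactor(2) [OF eq \<open>3 \<le> q\<close>] \<open>3 \<le> t\<close> by auto
  then have "(2::int)^(4 * e + 23) \<le> 2^(8 * t + 4)"
    by (rule power_increasing) simp
  then have "8388608 * K \<le> 2^(8 * t + 4)"
    by (simp add: K_def power_add mult.commute)
  moreover have "(K + 1) * N \<le> (K + 1) * 4194303"
    using \<open>N \<le> 2^22 - 1\<close> by (intro mult_left_mono) (auto simp: K_def)
  moreover have "(K + 1) * 4194303 = 4194303 * K + 4194303" by simp
  moreover have "1 \<le> K" by (simp add: K_def)
  ultimately have "int (npar t) < 2^(8 * t + 4)"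
    unfolding N K_def [symmetric] by linarith
  then show False by (simp add: npar_int)
qed

lemma card_cyc_coset_near_delta2:
  fixes x c :: int
  assumes "2 \<le> t" and "x = delta2 t - c" and "0 \<le> c" and "c \<le> 23130"
    and "t = 2 \<Longrightarrow> c \<le> 480"
  shows "card (cyc_coset (npar t) x) = 2 * mpar t"
proof (rule card_cyc_coset_npar)
  obtain j where j: "delta1 t + 45 = 128 * j"
    using delta1_plus_45_dvd [of t] assms(1) by (auto elim: dvdE)
  then have x: "x = delta1 t - j - c"
    using assms(1,2) by (simp add: delta2_def)
  have "(2::int)^20 \<le> 2^(8 * t + 4)"
    using assms(1) by (intro power_increasing) auto
  then have "1048577 \<le> int (npar t)" by (simp add: npar_int)
  note bounds = this x j delta1_mult_17 [of t] \<open>0 \<le> c\<close> \<open>c \<le> 23130\<close>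
  from bounds show "0 < x" by linarith
  from bounds show "x < int (npar t)" by linarith
  fix e q assume eq: "2 * t + 1 = e * q" and "3 \<le> q"
  show "\<not> int (npar t) dvd x * (2^(4 * e) + 1)"
  proof
    assume "int (npar t) dvd x * (2^(4 * e) + 1)"
    obtain N where N: "int (npar t) = (2^(4 * e) + 1) * N"
      using two_pow_plus_one_dvd_npar [OF eq] by (auto elim: dvdE)
    obtain B where B: "(2::int)^(4 * e) + 1 = 17 * B"
      using seventeen_dvd_two_pow_plus_one [OF odd_cofactor(1) [OF eq \<open>3 \<le> q\<close>]]
      by (auto elim: dvdE)
    have "17 * delta1 t = 17 * (N * (3 * B))"
      using delta1_mult_17 [of t] unfolding N B by (simp add: ac_simps)
    then have "N dvd delta1 t" by simp
    have "(2^(4 * e) + 1) * N dvd (2^(4 * e) + 1) * x"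
      using \<open>int (npar t) dvd x * (2^(4 * e) + 1)\<close> unfolding N by (simp add: ac_simps)
    moreover have "(0::int) < 2^(4 * e) + 1" by (simp add: add_pos_pos)
    ultimately have "N dvd x"
      by (subst (asm) dvd_mult_cancel_left) auto
    with \<open>N dvd delta1 t\<close> have "N dvd 128 * (delta1 t - x) - delta1 t" by simp
    also have "128 * (delta1 t - x) - delta1 t = 45 + 128 * c"
      using x j by simp
    finally have "N \<le> 45 + 128 * c"
      using \<open>0 \<le> c\<close> by (intro zdvd_imp_le) auto
    moreover have "45 + 128 * c < N"
    proof (cases "t = 2")
      case True
      then have "e = 1" using odd_cofactor [OF eq \<open>3 \<le> q\<close>] by presburger
      with N True have "N = 61681" by (simp add: npar_int)
      with True assms(5) show ?thesis by simp
    next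
      case False
      with assms(1) have "2^22 \<le> N" by (intro npar_cofactor_lower_bound [OF _ eq \<open>3 \<le> q\<close> N]) simp
      with \<open>c \<le> 23130\<close> show ?thesis by simp
    qed
    ultimately show False by simp
  qed
qed

lemma card_cyc_coset_delta:
  assumes "1 \<le> t" and "x \<in> {delta2 t, delta3 t, delta4 t, delta5 t}"
  shows "card (cyc_coset (npar t) x) = 2 * mpar t"
proof (cases "t = 1")
  case True
  with assms(2) card_cyc_coset_delta_t1 show ?thesis by simp
next
  case False
  have "delta2 t - x \<in> (if t = 2 then {0, 90, 96, 480} else {0, 90, 23040, 23130})"
    using assms(2) False by (auto simp: delta3_def delta4_def delta5_def)
  with False assms(1) show ?thesis
    by (intro card_cyc_coset_near_delta2 [where c = "delta2 t - x"]) (auto split: if_splits)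
qed

theorem lemma5p3:
  fixes t :: nat
  assumes "t \<ge> 1"
  shows "(\<forall>x :: int.
            ((1 \<le> x \<and> x \<le> 2^(4*t+3) + 2^(4*t+2) + 2^(4*t+1) + 1)
             \<or> x \<in> {delta2 t, delta3 t, delta4 t, delta5 t})
            \<longrightarrow> card (cyc_coset (npar t) x) = 2 * mpar t)
         \<and> card (cyc_coset (npar t) (delta1 t)) = 8"
  using card_cyc_coset_small [OF assms] card_cyc_coset_delta [OF assms] card_cyc_coset_delta1
  by blast

end
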